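(* Let $\alpha \ge 1$, $\gamma \ge 1$, $A>0$ be constants. Let $n,\rho:[0,T]\times\mathbb{R}^3\to\mathbb{R}$, $u,H:[0,T]\times\mathbb{R}^3\to\mathbb{R}^3$ be $C^1$ functions with $n>0$, $\rho\ge 0$ and $\operatorname{div} H = 0$. Set $R=\rho+n$, $S=\rho/n$, $P=\rho^\alpha + A n^\gamma$, $q = P+\tfrac12|H|^2$, and $\frac{d}{dt}=\partial_t + (u\cdot\nabla)$. Regard $P$ as the function $$P(R,S)=\Big(\frac{RS}{S+1}\Big)^\alpha + A\Big(\frac{R}{S+1}\Big)^\gamma,$$ and let $$P_R=\frac{\partial P(R,S)}{\partial R}=\frac{\alpha}{R}\Big(\frac{RS}{S+1}\Big)^\alpha+\frac{\gamma A}{R}\Big(\frac{R}{S+1}\Big)^\gamma>0.$$ Then $(n,\rho,u,H)$ satisfies the two-fluid MHD system $$\partial_t n+\operatorname{div}(nu)=0,\quad \partial_t\rho+\operatorname{div}(\rho u)=0,\quad \partial_t((\rho+n)u)+\operatorname{div}((\rho+n)u\otimes u-H\otimes H)+\nabla q=0,\quad \partial_t H-\nabla\times(u\times H)=0$$ if and only if $U=(P,u,H,S)$ satisfies $$\frac{1}{RP_R}\frac{dP}{dt}+\operatorname{div}u=0,\quad R\frac{du}{dt}-(H\cdot\nabla)H+\nabla q=0,\quad \frac{dH}{dt}-(H\cdot\nabla)u+H\operatorname{div}u=0,\quad \frac{dS}{dt}=0 .$$ Moreover, the latter system can be written as $A_0(U)\partial_t U+\sum_{j=1}^3 A_j(U)\partial_j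 U=0$ with $A_0=\operatorname{diag}(1/(RP_R),R,R,R,1,1,1,1)$ and symmetric $8\times 8$ matrices $A_j(U)$, $j=1,2,3$; in particular it is a symmetric hyperbolic system ($A_0>0$) whenever $n>0$ and $\rho\ge0$.
   Context: This concerns a model of ideal compressible isentropic two-fluid magnetohydrodynamics: $n$ and $\rho$ are the densities of the two fluids, $u$ the common velocity, $H$ the magnetic field, $P$ the pressure, $q$ the total pressure. The quantity $S=\rho/n$ is an "entropy-like" function and $R=\rho+n$ the total density; note $n=R/(S+1)$, $\rho=RS/(S+1)$. *)

theory Defs
  imports "HOL-Analysis.Analysis"
begin

definition C1_slab :: "real \<Rightarrow> (real \<Rightarrow> real^3 \<Rightarrow> 'b::real_normed_vector) \<Rightarrow> bool" where
  "C1_slab T f \<longleftrightarrow> (\<exists>D. (\<forall>p \<in> {0..T} \<times> UNIV.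
        ((\<lambda>q. f (fst q) (snd q)) has_derivative D p) (at p within {0..T} \<times> UNIV))
     \<and> (\<forall>v. continuous_on ({0..T} \<times> UNIV) (\<lambda>p. D p v)))"

definition pt :: "real \<Rightarrow> (real \<Rightarrow> real^3 \<Rightarrow> 'b::real_normed_vector) \<Rightarrow> real \<Rightarrow> real^3 \<Rightarrow> 'b" where
  "pt T f t x = vector_derivative (\<lambda>s. f s x) (at t within {0..T})"

definition px :: "3 \<Rightarrow> (real \<Rightarrow> real^3 \<Rightarrow> 'b::real_normed_vector) \<Rightarrow> real \<Rightarrow> real^3 \<Rightarrow> 'b" where
  "px j f t x = vector_derivative (\<lambda>s. f t (x + s *\<^sub>R axis j 1)) (at 0)"

definition dvg :: "(real \<Rightarrow> real^3 \<Rightarrow> real^3) \<Rightarrow> real \<Rightarrow> real^3 \<Rightarrow> real" where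
  "dvg F t x = (\<Sum>j\<in>UNIV. px j F t x $ j)"

definition grad :: "(real \<Rightarrow> real^3 \<Rightarrow> real) \<Rightarrow> real \<Rightarrow> real^3 \<Rightarrow> real^3" where
  "grad f t x = (\<chi> j. px j f t x)"

definition curl :: "(real \<Rightarrow> real^3 \<Rightarrow> real^3) \<Rightarrow> real \<Rightarrow> real^3 \<Rightarrow> real^3" where
  "curl F t x = vector [px 2 F t x $ 3 - px 3 F t x $ 2,
                        px 3 F t x $ 1 - px 1 F t x $ 3,
                        px 1 F t x $ 2 - px 2 F t x $ 1]"

definition outer :: "real^3 \<Rightarrow> real^3 \<Rightarrow> real^3^3" where
  "outer a b = (\<chi> i j. a $ i * b $ j)"

definition dvgT :: "(real \<Rightarrow> real^3 \<Rightarrow> real^3^3) \<Rightarrow> real \<Rightarrow> real^3 \<Rightarrow> real^3" where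
  "dvgT M t x = (\<chi> i. \<Sum>j\<in>UNIV. px j M t x $ i $ j)"

definition adv :: "(real \<Rightarrow> real^3 \<Rightarrow> real^3) \<Rightarrow> (real \<Rightarrow> real^3 \<Rightarrow> 'b::real_normed_vector) \<Rightarrow> real \<Rightarrow> real^3 \<Rightarrow> 'b" where
  "adv w f t x = (\<Sum>j\<in>UNIV. w t x $ j *\<^sub>R px j f t x)"

definition matd :: "real \<Rightarrow> (real \<Rightarrow> real^3 \<Rightarrow> real^3) \<Rightarrow> (real \<Rightarrow> real^3 \<Rightarrow> 'b::real_normed_vector) \<Rightarrow> real \<Rightarrow> real^3 \<Rightarrow> 'b" where
  "matd T u f t x = pt T f t x + adv u f t x"

definition Pfun :: "real \<Rightarrow> real \<Rightarrow> real \<Rightarrow> real \<Rightarrow> real \<Rightarrow> real" where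
  "Pfun \<alpha> \<gamma> A R S = (R * S / (S + 1)) powr \<alpha> + A * (R / (S + 1)) powr \<gamma>"

definition PR :: "real \<Rightarrow> real \<Rightarrow> real \<Rightarrow> real \<Rightarrow> real \<Rightarrow> real" where
  "PR \<alpha> \<gamma> A R S = \<alpha> / R * (R * S / (S + 1)) powr \<alpha> + \<gamma> * A / R * (R / (S + 1)) powr \<gamma>"

definition diag8 :: "real^8 \<Rightarrow> real^8^8" where
  "diag8 d = (\<chi> i j. if i = j then d $ i else 0)"

definition pos_def8 :: "real^8^8 \<Rightarrow> bool" where
  "pos_def8 M \<longleftrightarrow> (\<forall>v. v \<noteq> 0 \<longrightarrow> 0 < v \<bullet> (M *v v))"

end

theory Submission
  imports Defs
begin

text \<open>For smooth solutions with \<open>n > 0\<close> the two continuity equations say that the material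
derivatives of \<open>n\<close> and \<open>\<rho>\<close> are \<open>-n div u\<close> and \<open>-\<rho> div u\<close>. As \<open>P\<close> is a function of
\<open>(\<rho>, n)\<close> and \<open>S = \<rho>/n\<close>, this pair is equivalent to \<open>dP/dt = -(\<rho> P\<^sub>\<rho> + n P\<^sub>n) div u\<close> together
with \<open>dS/dt = 0\<close>, and \<open>\<rho> P\<^sub>\<rho> + n P\<^sub>n = R P\<^sub>R > 0\<close>. Once mass is conserved, the conservative
momentum equation differs from the advective one by a multiple of the continuity equations, and
\<open>div H = 0\<close> turns the curl form of the induction equation into the advective one.
The symmetric form is then read off componentwise; the coefficient matrices may depend on
\<open>R\<close>, because \<open>R\<close> is recovered from \<open>(P, S)\<close>: \<open>P(R, S)\<close> is strictly increasing in \<open>R\<close>.\<close>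

(* The case a = 1 is split off because 0 powr 0 = 0, so a * r powr (a - 1) would be wrong at r = 0. *)
definition powr_deriv :: "real \<Rightarrow> real \<Rightarrow> real" where
  "powr_deriv a r = (if a = 1 then 1 else a * r powr (a - 1))"

lemma mult_powr_deriv:
  fixes r :: real
  assumes "0 \<le> r"
  shows "r * powr_deriv a r = a * r powr a"
proof (cases "r = 0")
  case False
  with assms show ?thesis by (auto simp: powr_deriv_def powr_diff)
qed (simp add: powr_deriv_def)

lemma has_real_derivative_powr_nonneg:
  fixes g :: "real \<Rightarrow> real"
  assumes g: "(g has_real_derivative g') (at \<tau> within S)" and "\<tau> \<in> S"
    and nonneg: "\<forall>s\<in>S. 0 \<le> g s" and a: "1 \<le> a"
  shows "((\<lambda>s. g s powr a) has_real_derivative powr_deriv a (g \<tau>) * g') (at \<tau> within S)"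
proof (cases "a = 1")
  case True
  have "((\<lambda>s. g s powr a) has_real_derivative g') (at \<tau> within S)"
    using has_field_derivative_transform_within[OF g zero_less_one \<open>\<tau> \<in> S\<close>, of "\<lambda>s. g s powr a"]
      nonneg \<open>\<tau> \<in> S\<close> True by simp
  with True show ?thesis by (simp add: powr_deriv_def)
next
  case False
  with a have a1: "1 < a" by simp
  show ?thesis
  proof (cases "0 < g \<tau>")
    case True
    show ?thesis
      using DERIV_chain2[OF has_real_derivative_powr[OF True] g] False
      by (simp add: powr_deriv_def)
  next
    case False
    then have g0: "g \<tau> = 0" using nonneg \<open>\<tau> \<in> S\<close> by force
    have quot: "((\<lambda>y. (g y - g \<tau>) / (y - \<tau>)) \<longlongrightarrow> g') (at \<tau> within S)"
      using g by (simp add: has_field_derivative_iff)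
    have "(g \<longlongrightarrow> 0) (at \<tau> within S)"
      using DERIV_continuous[OF g] g0 by (simp add: continuous_within)
    then have "((\<lambda>y. g y powr (a - 1)) \<longlongrightarrow> 0) (at \<tau> within S)"
      by (rule tendsto_zero_powrI) (use a1 nonneg in \<open>auto simp: eventually_at_filter\<close>)
    from tendsto_mult[OF quot this]
    have "((\<lambda>y. (g y - g \<tau>) / (y - \<tau>) * g y powr (a - 1)) \<longlongrightarrow> 0) (at \<tau> within S)"
      by simp
    moreover have "g y * g y powr (a - 1) = g y powr a" if "y \<in> S" for y
      using nonneg that by (cases "g y = 0") (auto simp: powr_diff)
    then have "\<forall>\<^sub>F y in at \<tau> within S. (g y - g \<tau>) / (y - \<tau>) * g y powr (a - 1)
               = (g y powr a - g \<tau> powr a) / (y - \<tau>)"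
      using g0 by (auto simp: eventually_at_filter)
    ultimately have "((\<lambda>y. (g y powr a - g \<tau> powr a) / (y - \<tau>)) \<longlongrightarrow> 0) (at \<tau> within S)"
      by (rule Lim_transform_eventually)
    then show ?thesis using g0 a1 by (simp add: has_field_derivative_iff powr_deriv_def)
  qed
qed

lemma has_vector_derivative_vec_nth:
  "(f has_vector_derivative d) F \<Longrightarrow> ((\<lambda>s. f s $ i) has_vector_derivative d $ i) F"
  by (rule bounded_linear.has_vector_derivative[OF bounded_linear_vec_nth])

lemma has_vector_derivative_componentwise:
  fixes f :: "real \<Rightarrow> 'a::euclidean_space ^ 'n"
  assumes "\<And>i. ((\<lambda>s. f s $ i) has_vector_derivative d $ i) F"
  shows "(f has_vector_derivative d) F"
proof -
  have sum_axis: "v = (\<Sum>i\<in>UNIV. axis i (v $ i))" for v :: "'a^'n"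
    by (simp add: vec_eq_iff axis_def if_distrib cong: if_cong)
  have "bounded_linear (axis i :: 'a \<Rightarrow> 'a^'n)" for i
    unfolding linear_conv_bounded_linear[symmetric]
    by (rule linearI) (auto simp: vec_eq_iff axis_def)
  then have "((\<lambda>s. \<Sum>i\<in>UNIV. axis i (f s $ i)) has_vector_derivative (\<Sum>i\<in>UNIV. axis i (d $ i))) F"
    by (intro has_vector_derivative_sum bounded_linear.has_vector_derivative[OF _ assms])
  then show ?thesis by (simp flip: sum_axis)
qed

lemma has_vector_derivative_outer:
  assumes a: "(a has_vector_derivative a') (at \<tau> within S)"
      and b: "(b has_vector_derivative b') (at \<tau> within S)"
  shows "((\<lambda>s. outer (a s) (b s)) has_vector_derivative outer a' (b \<tau>) + outer (a \<tau>) b') (at \<tau> within S)"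
proof (intro has_vector_derivative_componentwise)
  fix i j
  show "((\<lambda>s. outer (a s) (b s) $ i $ j) has_vector_derivative (outer a' (b \<tau>) + outer (a \<tau>) b') $ i $ j) (at \<tau> within S)"
    using has_vector_derivative_mult[OF has_vector_derivative_vec_nth[OF a] has_vector_derivative_vec_nth[OF b]]
    by (simp add: outer_def algebra_simps)
qed

lemma has_vector_derivative_cross3:
  assumes a: "(a has_vector_derivative a') (at \<tau> within S)"
      and b: "(b has_vector_derivative b') (at \<tau> within S)"
  shows "((\<lambda>s. cross3 (a s) (b s)) has_vector_derivative cross3 a' (b \<tau>) + cross3 (a \<tau>) b') (at \<tau> within S)"
proof (rule has_vector_derivative_componentwise)
  fix i :: 3
  have prod: "((\<lambda>s. a s $ k * b s $ l) has_vector_derivative a \<tau> $ k * b' $ l + a' $ k * b \<tau> $ l) (at \<tau> within S)" for k l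
    by (rule has_vector_derivative_mult[OF has_vector_derivative_vec_nth[OF a] has_vector_derivative_vec_nth[OF b]])
  have "((\<lambda>s. a s $ k * b s $ l - a s $ l * b s $ k) has_vector_derivative
          a' $ k * b \<tau> $ l - a' $ l * b \<tau> $ k + (a \<tau> $ k * b' $ l - a \<tau> $ l * b' $ k)) (at \<tau> within S)" for k l
    by (rule has_vector_derivative_eq_rhs[OF has_vector_derivative_diff[OF prod prod]]) (simp add: algebra_simps)
  from this[of 2 3] this[of 3 1] this[of 1 2]
  show "((\<lambda>s. cross3 (a s) (b s) $ i) has_vector_derivative (cross3 a' (b \<tau>) + cross3 (a \<tau>) b') $ i) (at \<tau> within S)"
    using exhaust_3[of i] by (auto simp: cross3_def)
qed

lemma has_vector_derivative_norm_power2: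
  assumes "(a has_vector_derivative a') (at \<tau> within S)"
  shows "((\<lambda>s. (norm (a s))\<^sup>2) has_vector_derivative 2 * (a \<tau> \<bullet> a')) (at \<tau> within S)"
  using bounded_bilinear.has_vector_derivative[OF bounded_bilinear_inner assms assms]
  by (simp add: power2_norm_eq_inner inner_commute)

lemma exhaust_8:
  fixes i :: 8
  shows "i = 1 \<or> i = 2 \<or> i = 3 \<or> i = 4 \<or> i = 5 \<or> i = 6 \<or> i = 7 \<or> i = 8"
proof (induct i)
  case (of_int z)
  then have "z = 0 \<or> z = 1 \<or> z = 2 \<or> z = 3 \<or> z = 4 \<or> z = 5 \<or> z = 6 \<or> z = 7" by fastforce
  then show ?case by auto
qed

lemma forall_8: "(\<forall>i::8. P i) \<longleftrightarrow> P 1 \<and> P 2 \<and> P 3 \<and> P 4 \<and> P 5 \<and> P 6 \<and> P 7 \<and> P 8"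
  by (metis exhaust_8)

lemma vector_8 [simp]:
  "(vector [x1,x2,x3,x4,x5,x6,x7,x8] :: 'a::zero^8) $ 1 = x1"
  "(vector [x1,x2,x3,x4,x5,x6,x7,x8] :: 'a::zero^8) $ 2 = x2"
  "(vector [x1,x2,x3,x4,x5,x6,x7,x8] :: 'a::zero^8) $ 3 = x3"
  "(vector [x1,x2,x3,x4,x5,x6,x7,x8] :: 'a::zero^8) $ 4 = x4"
  "(vector [x1,x2,x3,x4,x5,x6,x7,x8] :: 'a::zero^8) $ 5 = x5"
  "(vector [x1,x2,x3,x4,x5,x6,x7,x8] :: 'a::zero^8) $ 6 = x6"
  "(vector [x1,x2,x3,x4,x5,x6,x7,x8] :: 'a::zero^8) $ 7 = x7"
  "(vector [x1,x2,x3,x4,x5,x6,x7,x8] :: 'a::zero^8) $ 8 = x8"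
  unfolding vector_def by simp_all

lemma has_vector_derivative_vector_8:
  assumes "(f1 has_vector_derivative d1) F" "(f2 has_vector_derivative d2) F"
    "(f3 has_vector_derivative d3) F" "(f4 has_vector_derivative d4) F"
    "(f5 has_vector_derivative d5) F" "(f6 has_vector_derivative d6) F"
    "(f7 has_vector_derivative d7) F" "(f8 has_vector_derivative d8) F"
  shows "((\<lambda>s. vector [f1 s, f2 s, f3 s, f4 s, f5 s, f6 s, f7 s, f8 s] :: real^8)
          has_vector_derivative vector [d1, d2, d3, d4, d5, d6, d7, d8]) F"
proof (rule has_vector_derivative_componentwise)
  fix i :: 8
  show "((\<lambda>s. (vector [f1 s, f2 s, f3 s, f4 s, f5 s, f6 s, f7 s, f8 s] :: real^8) $ i)
          has_vector_derivative (vector [d1, d2, d3, d4, d5, d6, d7, d8] :: real^8) $ i) F"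
    using exhaust_8[of i] assms by (elim disjE) (simp_all del: One_nat_def)
qed

lemma C1_slab_has_pt:
  assumes "C1_slab T f" "t \<in> {0..T}"
  shows "((\<lambda>s. f s x) has_vector_derivative pt T f t x) (at t within {0..T})"
proof -
  obtain D where D: "\<forall>p \<in> {0..T} \<times> UNIV.
        ((\<lambda>q. f (fst q) (snd q)) has_derivative D p) (at p within {0..T} \<times> UNIV)"
    using assms(1) unfolding C1_slab_def by blast
  have line: "((\<lambda>s. (s, x)) has_derivative (\<lambda>h. (h, 0))) (at t within {0..T})"
    by (auto intro!: derivative_eq_intros)
  have "((\<lambda>s. (\<lambda>q. f (fst q) (snd q)) (s, x)) has_derivative (\<lambda>h. D (t, x) (h, 0))) (at t within {0..T})"
    by (rule has_derivative_in_compose2[of "{0..T} \<times> UNIV" "\<lambda>q. f (fst q) (snd q)" D, OF _ _ _ line])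
       (use D assms(2) in auto)
  then have "(\<lambda>s. f s x) differentiable (at t within {0..T})"
    unfolding differentiable_def by auto
  then show ?thesis
    unfolding pt_def by (simp add: vector_derivative_works)
qed

lemma C1_slab_has_px:
  assumes "C1_slab T f" "t \<in> {0..T}"
  shows "((\<lambda>s. f t (x + s *\<^sub>R axis j 1)) has_vector_derivative px j f t x) (at 0)"
proof -
  obtain D where D: "\<forall>p \<in> {0..T} \<times> UNIV.
        ((\<lambda>q. f (fst q) (snd q)) has_derivative D p) (at p within {0..T} \<times> UNIV)"
    using assms(1) unfolding C1_slab_def by blast
  have line: "((\<lambda>s. (t, x + s *\<^sub>R axis j 1)) has_derivative (\<lambda>h. (0, h *\<^sub>R axis j 1))) (at 0)"
    by (auto intro!: derivative_eq_intros)
  have "((\<lambda>s. (\<lambda>q. f (fst q) (snd q)) (t, x + s *\<^sub>R axis j 1)) has_derivative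
          (\<lambda>h. D (t, x + 0 *\<^sub>R axis j 1) (0, h *\<^sub>R axis j 1))) (at 0)"
    by (rule has_derivative_in_compose2[of "{0..T} \<times> UNIV" "\<lambda>q. f (fst q) (snd q)" D, OF _ _ _ line])
       (use D assms(2) in auto)
  then have "(\<lambda>s. f t (x + s *\<^sub>R axis j 1)) differentiable (at 0)"
    unfolding differentiable_def by auto
  then show ?thesis
    unfolding px_def by (simp add: vector_derivative_works)
qed

lemma pt_eqI:
  assumes "((\<lambda>s. f s x) has_vector_derivative d) (at t within {0..T})" "t \<in> {0..T}" "0 < T"
  shows "pt T f t x = d"
proof -
  have "at t within {0..T} \<noteq> bot"
    using assms(2,3) by (auto simp: trivial_limit_within islimpt_Icc)
  then show ?thesis unfolding pt_def by (rule vector_derivative_within[OF _ assms(1)])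
qed

lemma px_eqI:
  assumes "((\<lambda>s. f t (x + s *\<^sub>R axis j 1)) has_vector_derivative d) (at 0)"
  shows "px j f t x = d"
  unfolding px_def by (rule vector_derivative_at[OF assms])

lemma continuity_iff_pressure_entropy:
  fixes n \<rho> p\<^sub>n p\<^sub>\<rho> dn d\<rho> d :: real
  assumes n: "0 < n" and K: "0 < \<rho> * p\<^sub>\<rho> + n * p\<^sub>n"
  shows "(dn + n * d = 0 \<and> d\<rho> + \<rho> * d = 0) \<longleftrightarrow>
         (1 / (\<rho> * p\<^sub>\<rho> + n * p\<^sub>n) * (p\<^sub>\<rho> * d\<rho> + p\<^sub>n * dn) + d = 0 \<and> (d\<rho> * n - \<rho> * dn) / (n * n) = 0)"
    (is "?mass \<longleftrightarrow> ?pressure \<and> ?entropy")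
proof
  assume ?mass
  then have "dn = - n * d" "d\<rho> = - \<rho> * d" by auto
  with K show "?pressure \<and> ?entropy" by (simp add: field_simps)
next
  let ?K = "\<rho> * p\<^sub>\<rho> + n * p\<^sub>n"
  assume "?pressure \<and> ?entropy"
  then have cross: "d\<rho> * n = \<rho> * dn" and p: "p\<^sub>\<rho> * d\<rho> + p\<^sub>n * dn = - ?K * d"
    using n K by (simp_all add: field_simps)
  have "?K * dn = n * (p\<^sub>\<rho> * d\<rho> + p\<^sub>n * dn)"
    using cross by (simp add: algebra_simps)
  also have "\<dots> = n * (- ?K * d)" by (simp only: p)
  also have "\<dots> = ?K * (- n * d)" by (simp add: algebra_simps)
  finally have dn: "dn = - n * d" using K by (metis mult_left_cancel less_irrefl)
  with cross have "d\<rho> * n = (- \<rho> * d) * n" by simp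
  with n have "d\<rho> = - \<rho> * d" by (metis mult_right_cancel less_irrefl)
  with dn show ?mass by simp
qed

(* The parameter \<tau> runs along either the time line or a coordinate line through (t, x),
   so these rules yield both the pt and the px derivatives of the composite fields. *)
lemma has_vector_derivative_two_fluid_fields:
  fixes n \<rho> :: "real \<Rightarrow> real" and u H :: "real \<Rightarrow> real^3" and A :: real
  assumes dn: "(n has_vector_derivative n') (at \<tau> within S)"
      and d\<rho>: "(\<rho> has_vector_derivative \<rho>') (at \<tau> within S)"
      and du: "(u has_vector_derivative u') (at \<tau> within S)"
      and dH: "(H has_vector_derivative H') (at \<tau> within S)"
      and "\<tau> \<in> S" and admissible: "\<forall>s\<in>S. 0 < n s \<and> 0 \<le> \<rho> s" and "1 \<le> \<alpha>" "1 \<le> \<gamma>"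
  defines "P' \<equiv> powr_deriv \<alpha> (\<rho> \<tau>) * \<rho>' + A * powr_deriv \<gamma> (n \<tau>) * n'"
  shows "((\<lambda>s. n s *\<^sub>R u s) has_vector_derivative n \<tau> *\<^sub>R u' + n' *\<^sub>R u \<tau>) (at \<tau> within S)"
    and "((\<lambda>s. \<rho> s *\<^sub>R u s) has_vector_derivative \<rho> \<tau> *\<^sub>R u' + \<rho>' *\<^sub>R u \<tau>) (at \<tau> within S)"
    and "((\<lambda>s. (\<rho> s + n s) *\<^sub>R u s) has_vector_derivative
            (\<rho> \<tau> + n \<tau>) *\<^sub>R u' + (\<rho>' + n') *\<^sub>R u \<tau>) (at \<tau> within S)"
    and "((\<lambda>s. (\<rho> s + n s) *\<^sub>R outer (u s) (u s) - outer (H s) (H s)) has_vector_derivative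
            (\<rho> \<tau> + n \<tau>) *\<^sub>R (outer u' (u \<tau>) + outer (u \<tau>) u') + (\<rho>' + n') *\<^sub>R outer (u \<tau>) (u \<tau>)
            - (outer H' (H \<tau>) + outer (H \<tau>) H')) (at \<tau> within S)"
    and "((\<lambda>s. \<rho> s powr \<alpha> + A * n s powr \<gamma>) has_vector_derivative P') (at \<tau> within S)"
    and "((\<lambda>s. \<rho> s powr \<alpha> + A * n s powr \<gamma> + 1/2 * (norm (H s))\<^sup>2) has_vector_derivative
            P' + H \<tau> \<bullet> H') (at \<tau> within S)"
    and "((\<lambda>s. cross3 (u s) (H s)) has_vector_derivative cross3 u' (H \<tau>) + cross3 (u \<tau>) H') (at \<tau> within S)"
    and "((\<lambda>s. \<rho> s / n s) has_vector_derivative (\<rho>' * n \<tau> - \<rho> \<tau> * n') / (n \<tau> * n \<tau>)) (at \<tau> within S)"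
    and "((\<lambda>s. vector [\<rho> s powr \<alpha> + A * n s powr \<gamma>, u s $ 1, u s $ 2, u s $ 3,
                        H s $ 1, H s $ 2, H s $ 3, \<rho> s / n s] :: real^8)
          has_vector_derivative vector [P', u' $ 1, u' $ 2, u' $ 3, H' $ 1, H' $ 2, H' $ 3,
                                        (\<rho>' * n \<tau> - \<rho> \<tau> * n') / (n \<tau> * n \<tau>)]) (at \<tau> within S)"
proof -
  have dn': "(n has_real_derivative n') (at \<tau> within S)"
    and d\<rho>': "(\<rho> has_real_derivative \<rho>') (at \<tau> within S)"
    using dn d\<rho> by (simp_all add: has_real_derivative_iff_has_vector_derivative)
  have dR: "((\<lambda>s. \<rho> s + n s) has_real_derivative \<rho>' + n') (at \<tau> within S)"
    by (rule DERIV_add[OF d\<rho>' dn'])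
  show "((\<lambda>s. n s *\<^sub>R u s) has_vector_derivative n \<tau> *\<^sub>R u' + n' *\<^sub>R u \<tau>) (at \<tau> within S)"
    by (rule has_vector_derivative_scaleR[OF dn' du])
  show "((\<lambda>s. \<rho> s *\<^sub>R u s) has_vector_derivative \<rho> \<tau> *\<^sub>R u' + \<rho>' *\<^sub>R u \<tau>) (at \<tau> within S)"
    by (rule has_vector_derivative_scaleR[OF d\<rho>' du])
  show "((\<lambda>s. (\<rho> s + n s) *\<^sub>R u s) has_vector_derivative
          (\<rho> \<tau> + n \<tau>) *\<^sub>R u' + (\<rho>' + n') *\<^sub>R u \<tau>) (at \<tau> within S)"
    by (rule has_vector_derivative_scaleR[OF dR du])
  show "((\<lambda>s. (\<rho> s + n s) *\<^sub>R outer (u s) (u s) - outer (H s) (H s)) has_vector_derivative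
          (\<rho> \<tau> + n \<tau>) *\<^sub>R (outer u' (u \<tau>) + outer (u \<tau>) u') + (\<rho>' + n') *\<^sub>R outer (u \<tau>) (u \<tau>)
          - (outer H' (H \<tau>) + outer (H \<tau>) H')) (at \<tau> within S)"
    by (intro has_vector_derivative_diff has_vector_derivative_scaleR[OF dR]
          has_vector_derivative_outer du dH)
  have "((\<lambda>s. \<rho> s powr \<alpha> + A * n s powr \<gamma>) has_real_derivative
          powr_deriv \<alpha> (\<rho> \<tau>) * \<rho>' + A * (powr_deriv \<gamma> (n \<tau>) * n')) (at \<tau> within S)"
    using assms
    by (intro DERIV_add DERIV_cmult has_real_derivative_powr_nonneg[OF d\<rho>'] has_real_derivative_powr_nonneg[OF dn'])
       (auto simp: less_imp_le)
  then show dP: "((\<lambda>s. \<rho> s powr \<alpha> + A * n s powr \<gamma>) has_vector_derivative P') (at \<tau> within S)"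
    by (simp add: P'_def mult.assoc has_real_derivative_iff_has_vector_derivative)
  show "((\<lambda>s. \<rho> s powr \<alpha> + A * n s powr \<gamma> + 1/2 * (norm (H s))\<^sup>2) has_vector_derivative
          P' + H \<tau> \<bullet> H') (at \<tau> within S)"
    using has_vector_derivative_add[OF dP has_vector_derivative_mult_right[OF has_vector_derivative_norm_power2[OF dH], of "1/2"]]
    by simp
  show "((\<lambda>s. cross3 (u s) (H s)) has_vector_derivative cross3 u' (H \<tau>) + cross3 (u \<tau>) H') (at \<tau> within S)"
    by (rule has_vector_derivative_cross3[OF du dH])
  have "0 < n \<tau>" using admissible \<open>\<tau> \<in> S\<close> by auto
  then have "((\<lambda>s. \<rho> s / n s) has_real_derivative (\<rho>' * n \<tau> - \<rho> \<tau> * n') / (n \<tau> * n \<tau>)) (at \<tau> within S)"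
    by (intro DERIV_divide[OF d\<rho>' dn']) simp
  then show dS: "((\<lambda>s. \<rho> s / n s) has_vector_derivative (\<rho>' * n \<tau> - \<rho> \<tau> * n') / (n \<tau> * n \<tau>)) (at \<tau> within S)"
    by (simp add: has_real_derivative_iff_has_vector_derivative)
  show "((\<lambda>s. vector [\<rho> s powr \<alpha> + A * n s powr \<gamma>, u s $ 1, u s $ 2, u s $ 3,
                        H s $ 1, H s $ 2, H s $ 3, \<rho> s / n s] :: real^8)
          has_vector_derivative vector [P', u' $ 1, u' $ 2, u' $ 3, H' $ 1, H' $ 2, H' $ 3,
                                        (\<rho>' * n \<tau> - \<rho> \<tau> * n') / (n \<tau> * n \<tau>)]) (at \<tau> within S)"
    by (intro has_vector_derivative_vector_8 dP dS has_vector_derivative_vec_nth[OF du]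
          has_vector_derivative_vec_nth[OF dH])
qed

lemma total_density_fractions:
  fixes n \<rho> :: real
  assumes "0 < n" "0 \<le> \<rho>"
  shows "(\<rho> + n) * (\<rho> / n) / (\<rho> / n + 1) = \<rho>" and "(\<rho> + n) / (\<rho> / n + 1) = n"
proof -
  have S1: "\<rho> / n + 1 = (\<rho> + n) / n" and "(\<rho> + n) / n \<noteq> 0"
    using assms by (simp_all add: field_simps)
  moreover have "(\<rho> + n) * (\<rho> / n) = \<rho> * ((\<rho> + n) / n)" by simp
  ultimately show "(\<rho> + n) * (\<rho> / n) / (\<rho> / n + 1) = \<rho>" by simp
  show "(\<rho> + n) / (\<rho> / n + 1) = n" unfolding S1 using assms by simp
qed

lemma Pfun_total_density:
  assumes "0 < n" "0 \<le> \<rho>"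
  shows "Pfun \<alpha> \<gamma> A (\<rho> + n) (\<rho> / n) = \<rho> powr \<alpha> + A * n powr \<gamma>"
  unfolding Pfun_def total_density_fractions[OF assms] ..

lemma total_density_mult_PR:
  assumes "0 < n" "0 \<le> \<rho>"
  shows "(\<rho> + n) * PR \<alpha> \<gamma> A (\<rho> + n) (\<rho> / n) = \<alpha> * \<rho> powr \<alpha> + \<gamma> * A * n powr \<gamma>"
proof -
  have "0 < \<rho> + n" using assms by simp
  then show ?thesis
    unfolding PR_def total_density_fractions[OF assms] by (simp add: distrib_left)
qed

lemma PR_total_density_pos:
  assumes "0 < n" "0 \<le> \<rho>" "0 \<le> \<alpha>" "0 < \<gamma>" "0 < A"
  shows "0 < PR \<alpha> \<gamma> A (\<rho> + n) (\<rho> / n)"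
proof -
  have "0 < (\<rho> + n) * PR \<alpha> \<gamma> A (\<rho> + n) (\<rho> / n)"
    using assms by (simp add: total_density_mult_PR add_nonneg_pos)
  with assms show ?thesis by (simp add: zero_less_mult_iff)
qed

lemma Pfun_strict_mono:
  assumes "0 < r1" "r1 < r2" "0 \<le> S" "1 \<le> \<alpha>" "1 \<le> \<gamma>" "0 < A"
  shows "Pfun \<alpha> \<gamma> A r1 S < Pfun \<alpha> \<gamma> A r2 S"
proof -
  have S1: "0 < S + 1" using assms by simp
  have "r1 * S / (S + 1) \<le> r2 * S / (S + 1)"
    using assms S1 by (intro divide_right_mono mult_right_mono) auto
  then have \<rho>_part: "(r1 * S / (S + 1)) powr \<alpha> \<le> (r2 * S / (S + 1)) powr \<alpha>"
    using assms S1 by (intro powr_mono2) auto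
  have "(r1 / (S + 1)) powr \<gamma> < (r2 / (S + 1)) powr \<gamma>"
    using assms S1 by (intro powr_less_mono2) (auto simp: divide_strict_right_mono)
  then have n_part: "A * (r1 / (S + 1)) powr \<gamma> < A * (r2 / (S + 1)) powr \<gamma>"
    using assms by simp
  show ?thesis unfolding Pfun_def using \<rho>_part n_part by simp
qed

(* The matrices A\<^sub>j must be functions of U = (P, u, H, S) alone; R is recovered from (P, S)
   because P(R, S) is strictly increasing in R. *)
definition density_of :: "real \<Rightarrow> real \<Rightarrow> real \<Rightarrow> real^8 \<Rightarrow> real" where
  "density_of \<alpha> \<gamma> A V = (THE r. 0 < r \<and> Pfun \<alpha> \<gamma> A r (V $ 8) = V $ 1)"

lemma density_of_eq:
  assumes "0 < r" "0 \<le> V $ 8" "V $ 1 = Pfun \<alpha> \<gamma> A r (V $ 8)" "1 \<le> \<alpha>" "1 \<le> \<gamma>" "0 < A"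
  shows "density_of \<alpha> \<gamma> A V = r"
  unfolding density_of_def
proof (rule the_equality)
  show "0 < r \<and> Pfun \<alpha> \<gamma> A r (V $ 8) = V $ 1" using assms by simp
  fix r' assume r': "0 < r' \<and> Pfun \<alpha> \<gamma> A r' (V $ 8) = V $ 1"
  show "r' = r"
  proof (rule linorder_cases[of r' r])
    assume "r' < r"
    with Pfun_strict_mono[of r' r "V $ 8" \<alpha> \<gamma> A] r' assms show ?thesis by simp
  next
    assume "r < r'"
    with Pfun_strict_mono[of r r' "V $ 8" \<alpha> \<gamma> A] r' assms show ?thesis by simp
  qed
qed

definition elem_mat :: "8 \<Rightarrow> 8 \<Rightarrow> real \<Rightarrow> real^8^8" where
  "elem_mat p q c = (\<chi> a b. if a = p \<and> b = q then c else 0)"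

definition u_index :: "3 \<Rightarrow> 8" where
  "u_index k = (if k = 1 then 2 else if k = 2 then 3 else 4)"

definition H_index :: "3 \<Rightarrow> 8" where
  "H_index k = (if k = 1 then 5 else if k = 2 then 6 else 7)"

(* The u-H entries \<delta>\<^sub>i\<^sub>j H\<^sub>k - \<delta>\<^sub>i\<^sub>k H\<^sub>j produce \<nabla>(|H|\<^sup>2/2) - (H\<cdot>\<nabla>)H in the momentum rows and
   H div u - (H\<cdot>\<nabla>)u in the induction rows. *)
definition magnetic_coupling :: "3 \<Rightarrow> real^8 \<Rightarrow> 3 \<Rightarrow> 3 \<Rightarrow> real" where
  "magnetic_coupling j V i k = (if i = j then V $ H_index k else 0) - (if i = k then V $ H_index j else 0)"

definition flux_matrix :: "real \<Rightarrow> real \<Rightarrow> real \<Rightarrow> 3 \<Rightarrow> real^8 \<Rightarrow> real^8^8" where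
  "flux_matrix \<alpha> \<gamma> A j V =
     (let R = density_of \<alpha> \<gamma> A V; u\<^sub>j = V $ u_index j in
       elem_mat 1 1 (u\<^sub>j / (R * PR \<alpha> \<gamma> A R (V $ 8)))
     + (elem_mat 1 (u_index j) 1 + elem_mat (u_index j) 1 1)
     + (\<Sum>i\<in>UNIV. elem_mat (u_index i) (u_index i) (R * u\<^sub>j))
     + (\<Sum>i\<in>UNIV. \<Sum>k\<in>UNIV. elem_mat (u_index i) (H_index k) (magnetic_coupling j V i k)
                            + elem_mat (H_index k) (u_index i) (magnetic_coupling j V i k))
     + (\<Sum>i\<in>UNIV. elem_mat (H_index i) (H_index i) u\<^sub>j)
     + elem_mat 8 8 u\<^sub>j)"

lemma transpose_elem_mat: "transpose (elem_mat p q c) = elem_mat q p c"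
  by (auto simp: transpose_def elem_mat_def vec_eq_iff)

lemma transpose_add: "transpose (M + N :: 'a::semiring_1^'n^'m) = transpose M + transpose N"
  by (simp add: transpose_def vec_eq_iff)

lemma transpose_sum: "transpose (\<Sum>i\<in>I. M i :: 'a::semiring_1^'n^'m) = (\<Sum>i\<in>I. transpose (M i))"
  by (induct I rule: infinite_finite_induct) (simp_all add: transpose_add transpose_def vec_eq_iff)

lemma transpose_flux_matrix: "transpose (flux_matrix \<alpha> \<gamma> A j V) = flux_matrix \<alpha> \<gamma> A j V"
  unfolding flux_matrix_def Let_def transpose_add transpose_sum transpose_elem_mat
  by (simp add: add.commute)

lemma if_zero_mult: "(if P then c else 0) * (y :: 'a::mult_zero) = (if P then c * y else 0)"
  by simp

lemma elem_mat_mult: "elem_mat p q c *v w = (\<chi> a. if a = p then c * w $ q else 0)"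
  unfolding elem_mat_def matrix_vector_mult_def by (simp add: vec_eq_iff if_zero_mult cong: if_cong)

lemma sum_matrix_vector_mult: "(\<Sum>i\<in>I. M i :: real^'n^'m) *v w = (\<Sum>i\<in>I. M i *v w)"
  by (induct I rule: infinite_finite_induct) (simp_all add: matrix_vector_mult_add_rdistrib)

lemma flux_matrix_mult_nth:
  "(flux_matrix \<alpha> \<gamma> A j V *v w) $ a =
     (let R = density_of \<alpha> \<gamma> A V; u\<^sub>j = V $ u_index j in
       (if a = 1 then u\<^sub>j / (R * PR \<alpha> \<gamma> A R (V $ 8)) * w $ 1 + w $ u_index j else 0)
     + (if a = u_index j then w $ 1 else 0)
     + (\<Sum>i\<in>UNIV. if a = u_index i then R * u\<^sub>j * w $ u_index i else 0)
     + (\<Sum>i\<in>UNIV. \<Sum>k\<in>UNIV. (if a = u_index i then magnetic_coupling j V i k * w $ H_index k else 0)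
                            + (if a = H_index k then magnetic_coupling j V i k * w $ u_index i else 0))
     + (\<Sum>i\<in>UNIV. if a = H_index i then u\<^sub>j * w $ H_index i else 0)
     + (if a = 8 then u\<^sub>j * w $ 8 else 0))"
  unfolding flux_matrix_def Let_def matrix_vector_mult_add_rdistrib sum_matrix_vector_mult elem_mat_mult
  by (simp add: if_distrib cong: if_cong)

lemma diag8_mult_nth: "(diag8 d *v w) $ a = d $ a * w $ a"
  unfolding diag8_def matrix_vector_mult_def by (simp add: if_zero_mult cong: if_cong)

lemma pos_def8_diag8:
  assumes "\<forall>i. 0 < d $ i"
  shows "pos_def8 (diag8 d)"
  unfolding pos_def8_def
proof (intro allI impI)
  fix v :: "real^8"
  assume "v \<noteq> 0"
  then obtain i where i: "v $ i \<noteq> 0" by (auto simp: vec_eq_iff)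
  have "v \<bullet> (diag8 d *v v) = (\<Sum>a\<in>UNIV. d $ a * (v $ a)\<^sup>2)"
    unfolding inner_vec_def diag8_mult_nth by (simp add: power2_eq_square algebra_simps)
  also have "\<dots> > 0"
    by (rule sum_pos2[where i=i]) (use assms i in \<open>simp_all add: less_imp_le\<close>)
  finally show "0 < v \<bullet> (diag8 d *v v)" .
qed

locale two_fluid_point =
  fixes T \<alpha> \<gamma> A :: real
    and n \<rho> :: "real \<Rightarrow> real^3 \<Rightarrow> real" and u H :: "real \<Rightarrow> real^3 \<Rightarrow> real^3"
    and t :: real and x :: "real^3"
  assumes \<alpha>: "1 \<le> \<alpha>" and \<gamma>: "1 \<le> \<gamma>" and A: "0 < A" and T: "0 < T"
    and C1: "C1_slab T n" "C1_slab T \<rho>" "C1_slab T u" "C1_slab T H"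
    and admissible: "\<forall>t\<in>{0..T}. \<forall>x. 0 < n t x \<and> 0 \<le> \<rho> t x \<and> dvg H t x = 0"
    and t: "t \<in> {0..T}"
begin

abbreviation R :: "real \<Rightarrow> real^3 \<Rightarrow> real" where "R \<equiv> \<lambda>t x. \<rho> t x + n t x"
abbreviation S :: "real \<Rightarrow> real^3 \<Rightarrow> real" where "S \<equiv> \<lambda>t x. \<rho> t x / n t x"
abbreviation P :: "real \<Rightarrow> real^3 \<Rightarrow> real" where "P \<equiv> \<lambda>t x. \<rho> t x powr \<alpha> + A * n t x powr \<gamma>"
abbreviation q :: "real \<Rightarrow> real^3 \<Rightarrow> real" where "q \<equiv> \<lambda>t x. P t x + 1/2 * (norm (H t x))\<^sup>2"

abbreviation U :: "real \<Rightarrow> real^3 \<Rightarrow> real^8" where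
  "U \<equiv> \<lambda>t x. vector [P t x, u t x $ 1, u t x $ 2, u t x $ 3, H t x $ 1, H t x $ 2, H t x $ 3, S t x]"
abbreviation A\<^sub>0 :: "real^8^8" where
  "A\<^sub>0 \<equiv> diag8 (vector [1 / (R t x * PR \<alpha> \<gamma> A (R t x) (S t x)), R t x, R t x, R t x, 1, 1, 1, 1])"

abbreviation p\<^sub>\<rho> :: real where "p\<^sub>\<rho> \<equiv> powr_deriv \<alpha> (\<rho> t x)"
abbreviation p\<^sub>n :: real where "p\<^sub>n \<equiv> A * powr_deriv \<gamma> (n t x)"

abbreviation conservative_system :: bool where
  "conservative_system \<equiv>
     pt T n t x + dvg (\<lambda>t x. n t x *\<^sub>R u t x) t x = 0 \<and>
     pt T \<rho> t x + dvg (\<lambda>t x. \<rho> t x *\<^sub>R u t x) t x = 0 \<and>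
     pt T (\<lambda>t x. R t x *\<^sub>R u t x) t x
       + dvgT (\<lambda>t x. R t x *\<^sub>R outer (u t x) (u t x) - outer (H t x) (H t x)) t x + grad q t x = 0 \<and>
     pt T H t x - curl (\<lambda>t x. cross3 (u t x) (H t x)) t x = 0"

abbreviation primitive_system :: bool where
  "primitive_system \<equiv>
     1 / (R t x * PR \<alpha> \<gamma> A (R t x) (S t x)) * matd T u P t x + dvg u t x = 0 \<and>
     R t x *\<^sub>R matd T u u t x - adv H H t x + grad q t x = 0 \<and>
     matd T u H t x - adv H u t x + dvg u t x *\<^sub>R H t x = 0 \<and>
     matd T u S t x = 0"

lemma n_pos: "0 < n t x" and \<rho>_nonneg: "0 \<le> \<rho> t x"
  using admissible t by auto

lemma admissible_time_line: "\<forall>s\<in>{0..T}. 0 < n s x \<and> 0 \<le> \<rho> s x"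
  and admissible_space_line: "\<forall>s\<in>UNIV. 0 < n t (x + s *\<^sub>R axis j 1) \<and> 0 \<le> \<rho> t (x + s *\<^sub>R axis j 1)"
  using admissible t by auto

lemmas time_derivatives = has_vector_derivative_two_fluid_fields
  [OF C1_slab_has_pt[OF C1(1) t, where x = x] C1_slab_has_pt[OF C1(2) t, where x = x]
      C1_slab_has_pt[OF C1(3) t, where x = x] C1_slab_has_pt[OF C1(4) t, where x = x]
      t admissible_time_line \<alpha> \<gamma>]

lemmas space_derivatives = has_vector_derivative_two_fluid_fields
  [OF C1_slab_has_px[OF C1(1) t, where x = x and j = j] C1_slab_has_px[OF C1(2) t, where x = x and j = j]
      C1_slab_has_px[OF C1(3) t, where x = x and j = j] C1_slab_has_px[OF C1(4) t, where x = x and j = j]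
      UNIV_I admissible_space_line \<alpha> \<gamma>,
    unfolded scaleR_zero_left add_0_right] for j

lemma px_n_u: "px j (\<lambda>t x. n t x *\<^sub>R u t x) t x = n t x *\<^sub>R px j u t x + px j n t x *\<^sub>R u t x"
  by (rule px_eqI, rule space_derivatives(1))

lemma px_\<rho>_u: "px j (\<lambda>t x. \<rho> t x *\<^sub>R u t x) t x = \<rho> t x *\<^sub>R px j u t x + px j \<rho> t x *\<^sub>R u t x"
  by (rule px_eqI, rule space_derivatives(2))

lemma pt_momentum: "pt T (\<lambda>t x. R t x *\<^sub>R u t x) t x
    = R t x *\<^sub>R pt T u t x + (pt T \<rho> t x + pt T n t x) *\<^sub>R u t x"
  by (rule pt_eqI[OF _ t T], rule time_derivatives(3))

lemma px_momentum_flux: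
  "px j (\<lambda>t x. R t x *\<^sub>R outer (u t x) (u t x) - outer (H t x) (H t x)) t x
    = R t x *\<^sub>R (outer (px j u t x) (u t x) + outer (u t x) (px j u t x))
      + (px j \<rho> t x + px j n t x) *\<^sub>R outer (u t x) (u t x)
      - (outer (px j H t x) (H t x) + outer (H t x) (px j H t x))"
  by (rule px_eqI, rule space_derivatives(4))

lemma pt_P: "pt T P t x = p\<^sub>\<rho> * pt T \<rho> t x + p\<^sub>n * pt T n t x"
  by (rule pt_eqI[OF _ t T], rule time_derivatives(5))

lemma px_P: "px j P t x = p\<^sub>\<rho> * px j \<rho> t x + p\<^sub>n * px j n t x"
  by (rule px_eqI, rule space_derivatives(5))

lemma px_q: "px j q t x = p\<^sub>\<rho> * px j \<rho> t x + p\<^sub>n * px j n t x + H t x \<bullet> px j H t x"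
  by (rule px_eqI, rule space_derivatives(6))

lemma px_cross: "px j (\<lambda>t x. cross3 (u t x) (H t x)) t x
    = cross3 (px j u t x) (H t x) + cross3 (u t x) (px j H t x)"
  by (rule px_eqI, rule space_derivatives(7))

lemma pt_S: "pt T S t x = (pt T \<rho> t x * n t x - \<rho> t x * pt T n t x) / (n t x * n t x)"
  by (rule pt_eqI[OF _ t T], rule time_derivatives(8))

lemma px_S: "px j S t x = (px j \<rho> t x * n t x - \<rho> t x * px j n t x) / (n t x * n t x)"
  by (rule px_eqI, rule space_derivatives(8))

lemma pt_U: "pt T U t x = vector [p\<^sub>\<rho> * pt T \<rho> t x + p\<^sub>n * pt T n t x,
    pt T u t x $ 1, pt T u t x $ 2, pt T u t x $ 3, pt T H t x $ 1, pt T H t x $ 2, pt T H t x $ 3,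
    (pt T \<rho> t x * n t x - \<rho> t x * pt T n t x) / (n t x * n t x)]"
  by (rule pt_eqI[OF _ t T], rule time_derivatives(9))

lemma px_U: "px j U t x = vector [p\<^sub>\<rho> * px j \<rho> t x + p\<^sub>n * px j n t x,
    px j u t x $ 1, px j u t x $ 2, px j u t x $ 3, px j H t x $ 1, px j H t x $ 2, px j H t x $ 3,
    (px j \<rho> t x * n t x - \<rho> t x * px j n t x) / (n t x * n t x)]"
  by (rule px_eqI, rule space_derivatives(9))

lemma px3_H3: "px 3 H t x $ 3 = - px 1 H t x $ 1 - px 2 H t x $ 2"
proof -
  have "dvg H t x = 0" using admissible t by auto
  then show ?thesis by (simp add: dvg_def sum_3)
qed

lemma mass_n_eq: "pt T n t x + dvg (\<lambda>t x. n t x *\<^sub>R u t x) t x = matd T u n t x + n t x * dvg u t x"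
  unfolding dvg_def matd_def adv_def px_n_u by (simp add: sum_3 algebra_simps)

lemma mass_\<rho>_eq: "pt T \<rho> t x + dvg (\<lambda>t x. \<rho> t x *\<^sub>R u t x) t x = matd T u \<rho> t x + \<rho> t x * dvg u t x"
  unfolding dvg_def matd_def adv_def px_\<rho>_u by (simp add: sum_3 algebra_simps)

lemma momentum_eq:
  "pt T (\<lambda>t x. R t x *\<^sub>R u t x) t x
     + dvgT (\<lambda>t x. R t x *\<^sub>R outer (u t x) (u t x) - outer (H t x) (H t x)) t x + G
   = ((matd T u n t x + n t x * dvg u t x) + (matd T u \<rho> t x + \<rho> t x * dvg u t x)) *\<^sub>R u t x
     + (R t x *\<^sub>R matd T u u t x - adv H H t x + G)"
  unfolding vec_eq_iff dvgT_def matd_def adv_def dvg_def px_momentum_flux pt_momentum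
  by (simp add: sum_3 outer_def algebra_simps px3_H3)

lemma induction_eq:
  "pt T H t x - curl (\<lambda>t x. cross3 (u t x) (H t x)) t x = matd T u H t x - adv H u t x + dvg u t x *\<^sub>R H t x"
  unfolding vec_eq_iff forall_3 curl_def matd_def adv_def dvg_def px_cross
  by (simp add: sum_3 cross3_def algebra_simps px3_H3)

lemma matd_P: "matd T u P t x = p\<^sub>\<rho> * matd T u \<rho> t x + p\<^sub>n * matd T u n t x"
  unfolding matd_def adv_def pt_P px_P by (simp add: sum_3 algebra_simps)

lemma matd_S: "matd T u S t x = (matd T u \<rho> t x * n t x - \<rho> t x * matd T u n t x) / (n t x * n t x)"
  unfolding matd_def adv_def pt_S px_S using n_pos by (simp add: sum_3 field_simps)

lemma R_mult_PR: "R t x * PR \<alpha> \<gamma> A (R t x) (S t x) = \<rho> t x * p\<^sub>\<rho> + n t x * p\<^sub>n"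
  using n_pos \<rho>_nonneg
  by (simp add: total_density_mult_PR mult_powr_deriv mult.left_commute[of "n t x"])

lemma R_mult_PR_pos: "0 < \<rho> t x * p\<^sub>\<rho> + n t x * p\<^sub>n"
proof -
  have "0 < (\<rho> t x + n t x) * PR \<alpha> \<gamma> A (\<rho> t x + n t x) (\<rho> t x / n t x)"
    using n_pos \<rho>_nonneg \<alpha> \<gamma> A by (intro mult_pos_pos PR_total_density_pos) auto
  then show ?thesis using R_mult_PR by simp
qed

theorem conservative_iff_primitive: "conservative_system \<longleftrightarrow> primitive_system"
  unfolding mass_n_eq mass_\<rho>_eq momentum_eq induction_eq matd_P matd_S R_mult_PR
  using continuity_iff_pressure_entropy[OF n_pos R_mult_PR_pos,
          of "matd T u n t x" "dvg u t x" "matd T u \<rho> t x"]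
  by auto

lemma density_of_U: "density_of \<alpha> \<gamma> A (U t x) = R t x"
  using n_pos \<rho>_nonneg \<alpha> \<gamma> A by (intro density_of_eq) (simp_all add: Pfun_total_density)

abbreviation symmetric_system_lhs :: "real^8" where
  "symmetric_system_lhs \<equiv> A\<^sub>0 *v pt T U t x + (\<Sum>j\<in>UNIV. flux_matrix \<alpha> \<gamma> A j (U t x) *v px j U t x)"

lemma symmetric_system_lhs_nth:
  shows "symmetric_system_lhs $ 1 = 1 / (R t x * PR \<alpha> \<gamma> A (R t x) (S t x)) * matd T u P t x + dvg u t x"
    and "symmetric_system_lhs $ 2 = (R t x *\<^sub>R matd T u u t x - adv H H t x + grad q t x) $ 1"
    and "symmetric_system_lhs $ 3 = (R t x *\<^sub>R matd T u u t x - adv H H t x + grad q t x) $ 2"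
    and "symmetric_system_lhs $ 4 = (R t x *\<^sub>R matd T u u t x - adv H H t x + grad q t x) $ 3"
    and "symmetric_system_lhs $ 5 = (matd T u H t x - adv H u t x + dvg u t x *\<^sub>R H t x) $ 1"
    and "symmetric_system_lhs $ 6 = (matd T u H t x - adv H u t x + dvg u t x *\<^sub>R H t x) $ 2"
    and "symmetric_system_lhs $ 7 = (matd T u H t x - adv H u t x + dvg u t x *\<^sub>R H t x) $ 3"
    and "symmetric_system_lhs $ 8 = matd T u S t x"
  unfolding vector_add_component sum_component diag8_mult_nth flux_matrix_mult_nth density_of_U
    pt_U px_U matd_def adv_def dvg_def grad_def px_P px_q pt_P pt_S px_S Let_def
    vector_minus_component vector_scaleR_component vec_lambda_beta
  by (simp_all add: sum_3 u_index_def H_index_def magnetic_coupling_def algebra_simps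
      add_divide_distrib inner_vec_def)

theorem symmetric_form:
  "P t x = Pfun \<alpha> \<gamma> A (R t x) (S t x) \<and> 0 < PR \<alpha> \<gamma> A (R t x) (S t x) \<and> pos_def8 A\<^sub>0 \<and>
   (primitive_system \<longleftrightarrow> symmetric_system_lhs = 0)"
proof -
  have R_pos: "0 < R t x" using n_pos \<rho>_nonneg by simp
  have PR_pos: "0 < PR \<alpha> \<gamma> A (R t x) (S t x)"
    using n_pos \<rho>_nonneg \<alpha> \<gamma> A by (intro PR_total_density_pos) auto
  have "pos_def8 A\<^sub>0"
    by (rule pos_def8_diag8) (use R_pos PR_pos in \<open>simp add: forall_8 del: One_nat_def\<close>)
  moreover have "primitive_system \<longleftrightarrow> symmetric_system_lhs = 0"
    unfolding vec_eq_iff[of symmetric_system_lhs] forall_8 symmetric_system_lhs_nth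
      vec_eq_iff[of "_ - _ + _"] forall_3 zero_index
    by (simp del: One_nat_def)
  ultimately show ?thesis
    using PR_pos n_pos \<rho>_nonneg by (simp add: Pfun_total_density)
qed

end

theorem mainTheorem1:
  fixes \<alpha> \<gamma> A T :: real
  assumes "\<alpha> \<ge> 1" and "\<gamma> \<ge> 1" and "A > 0" and "T > 0"
  shows
   "(\<forall>(n :: real \<Rightarrow> real^3 \<Rightarrow> real) (\<rho> :: real \<Rightarrow> real^3 \<Rightarrow> real)
       (u :: real \<Rightarrow> real^3 \<Rightarrow> real^3) (H :: real \<Rightarrow> real^3 \<Rightarrow> real^3).
      C1_slab T n \<and> C1_slab T \<rho> \<and> C1_slab T u \<and> C1_slab T H \<and>
      (\<forall>t\<in>{0..T}. \<forall>x. n t x > 0 \<and> \<rho> t x \<ge> 0 \<and> dvg H t x = 0) \<longrightarrow>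
      (let R = (\<lambda>t x. \<rho> t x + n t x);
           S = (\<lambda>t x. \<rho> t x / n t x);
           P = (\<lambda>t x. \<rho> t x powr \<alpha> + A * n t x powr \<gamma>);
           q = (\<lambda>t x. P t x + 1/2 * (norm (H t x))\<^sup>2)
       in
        ((\<forall>t\<in>{0..T}. \<forall>x.
            pt T n t x + dvg (\<lambda>t x. n t x *\<^sub>R u t x) t x = 0 \<and>
            pt T \<rho> t x + dvg (\<lambda>t x. \<rho> t x *\<^sub>R u t x) t x = 0 \<and>
            pt T (\<lambda>t x. R t x *\<^sub>R u t x) t x
              + dvgT (\<lambda>t x. R t x *\<^sub>R outer (u t x) (u t x) - outer (H t x) (H t x)) t x
              + grad q t x = 0 \<and>
            pt T H t x - curl (\<lambda>t x. cross3 (u t x) (H t x)) t x = 0)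
        \<longleftrightarrow>
         (\<forall>t\<in>{0..T}. \<forall>x.
            1 / (R t x * PR \<alpha> \<gamma> A (R t x) (S t x)) * matd T u P t x + dvg u t x = 0 \<and>
            R t x *\<^sub>R matd T u u t x - adv H H t x + grad q t x = 0 \<and>
            matd T u H t x - adv H u t x + dvg u t x *\<^sub>R H t x = 0 \<and>
            matd T u S t x = 0))))
    \<and>
    (\<exists>Aj :: 3 \<Rightarrow> real^8 \<Rightarrow> real^8^8.
      (\<forall>j V. transpose (Aj j V) = Aj j V) \<and>
      (\<forall>(n :: real \<Rightarrow> real^3 \<Rightarrow> real) (\<rho> :: real \<Rightarrow> real^3 \<Rightarrow> real)
         (u :: real \<Rightarrow> real^3 \<Rightarrow> real^3) (H :: real \<Rightarrow> real^3 \<Rightarrow> real^3).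
        C1_slab T n \<and> C1_slab T \<rho> \<and> C1_slab T u \<and> C1_slab T H \<and>
        (\<forall>t\<in>{0..T}. \<forall>x. n t x > 0 \<and> \<rho> t x \<ge> 0 \<and> dvg H t x = 0) \<longrightarrow>
        (let R = (\<lambda>t x. \<rho> t x + n t x);
             S = (\<lambda>t x. \<rho> t x / n t x);
             P = (\<lambda>t x. \<rho> t x powr \<alpha> + A * n t x powr \<gamma>);
             q = (\<lambda>t x. P t x + 1/2 * (norm (H t x))\<^sup>2);
             U = (\<lambda>t x. vector [P t x, u t x $ 1, u t x $ 2, u t x $ 3,
                                 H t x $ 1, H t x $ 2, H t x $ 3, S t x] :: real^8);
             A0 = (\<lambda>t x. diag8 (vector [1 / (R t x * PR \<alpha> \<gamma> A (R t x) (S t x)),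
                                        R t x, R t x, R t x, 1, 1, 1, 1]))
         in
          (\<forall>t\<in>{0..T}. \<forall>x.
             P t x = Pfun \<alpha> \<gamma> A (R t x) (S t x) \<and>
             PR \<alpha> \<gamma> A (R t x) (S t x) > 0 \<and>
             pos_def8 (A0 t x) \<and>
             ((1 / (R t x * PR \<alpha> \<gamma> A (R t x) (S t x)) * matd T u P t x + dvg u t x = 0 \<and>
               R t x *\<^sub>R matd T u u t x - adv H H t x + grad q t x = 0 \<and>
               matd T u H t x - adv H u t x + dvg u t x *\<^sub>R H t x = 0 \<and>
               matd T u S t x = 0)
              \<longleftrightarrow>
              A0 t x *v pt T U t x + (\<Sum>j\<in>UNIV. Aj j (U t x) *v px j U t x) = 0)))))"
proof -
  have point: "two_fluid_point T \<alpha> \<gamma> A n \<rho> u H t"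
    if "C1_slab T n \<and> C1_slab T \<rho> \<and> C1_slab T u \<and> C1_slab T H \<and>
        (\<forall>t\<in>{0..T}. \<forall>x. n t x > 0 \<and> \<rho> t x \<ge> 0 \<and> dvg H t x = 0)" "t \<in> {0..T}"
    for n \<rho> u H t
    using assms that by (simp add: two_fluid_point_def)
  show ?thesis
    unfolding Let_def
    using two_fluid_point.conservative_iff_primitive[OF point] two_fluid_point.symmetric_form[OF point]
      transpose_flux_matrix
    by blast
qed

end
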